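(* Let $\mathbf{X}$, $\mathbf{A}$ be $\sigma$-structures, let $k\ge1$, and let $r$ be the maximum arity of a relation symbol in $\sigma$. Then: (1) if $\mathbb{P}^k\ne\emptyset$ and $r\le k$, then $\mathrm{SA}^k(\mathbf{X},\mathbf{A})$ is feasible; (2) if $\mathrm{SA}^{k+r-1}(\mathbf{X},\mathbf{A})$ is feasible, then $\mathbb{P}^k\ne\emptyset$.
   Context: A signature $\sigma$ is a finite set of relation symbols with arities $\operatorname{ar}(R)\ge1$; a $\sigma$-structure has finite universe and relations $R^\mathbf{A}\subseteq A^{\operatorname{ar}(R)}$. Constraints: $\mathcal{C}_\mathbf{X}=\{R(\mathbf{x}):R\in\sigma,\mathbf{x}\in R^\mathbf{X}\}$; $\{\mathbf{x}\}$ is the set of entries of a tuple $\mathbf{x}$. $\mathrm{SA}^k(\mathbf{X},\mathbf{A})$: variables $p_V(f)\in[0,1]$ ($V\subseteq X$, $1\le|V|\le k$, $f:V\to A$) and $p_{R(\mathbf{x})}(f)\in[0,1]$ ($R(\mathbf{x})\in\mathcal{C}_\mathbf{X}$, $f:\{\mathbf{x}\}\to A$); constraints $\sum_{f:V\to A}p_V(f)=1$; $p_U(f)=\sum_{g:V\to A,g|_U=f}p_V(g)$ for $\emptyset\ne U\subseteq V\subseteq X$, $|V|\le k$; $p_U(f)=\sum_{g:\{\mathbf{x}\}\to A,g|_U=f}p_{R(\mathbf{x})}(g)$ for $R(\mathbf{x})\in\mathcal{C}_\mathbf{X}$, $\emptyset\ne U\subseteq\{\mathbf{x}\}$, $|U|\le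 k$; $p_{R(\mathbf{x})}(f)=0$ if $f(\mathbf{x})\notin R^\mathbf{A}$. Feasible means a (rational) solution exists. The polytope $\mathbb{P}=\mathbb{P}(\mathbf{X},\mathbf{A})\subseteq[0,1]^{X\times A}$ has variables $y_{x,a}\in[0,1]$ subject to $\sum_{a\in A}y_{x,a}=1$ for each $x\in X$, and $\sum_{x\in\{\mathbf{x}\}}y_{x,f(x)}\le|\{\mathbf{x}\}|-1$ for each $R\in\sigma$, $\mathbf{x}\in R^\mathbf{X}$ and $f:\{\mathbf{x}\}\to A$ with $f(\mathbf{x})\notin R^\mathbf{A}$. Sherali–Adams: writing $\mathbb{P}=\{\mathbf{y}\in\mathbb{R}^n: M\mathbf{y}\ge\mathbf{b},\ 0\le\mathbf{y}\le1\}$ (equalities as pairs of inequalities), multiply each inequality of $M\mathbf{y}\ge\mathbf{b}$ by every term $\prod_{i\in I}y_i\prod_{j\in J}(1-y_j)$ with $I\cap J=\emptyset$, $|I\cup J|\le k-1$; linearize by replacing each $y_i^2$ by $y_i$ and each monomial $\prod_{i\in K}y_i$ by a new variable $z_K$, obtaining a polytope $\mathbb{P}^k_L$; then $\mathbb{P}^k=\{\mathbf{y}\in\mathbb{R}^n:\exists\mathbf{z}\in\mathbb{P}^k_L\text{ with }z_{\{i\}}=y_i\ \forall i\}$. *)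

theory Defs
  imports Complex_Main "HOL-Library.FuncSet"
begin

definition signature :: "'r set \<Rightarrow> ('r \<Rightarrow> nat) \<Rightarrow> bool" where
  "signature sig ar \<longleftrightarrow> finite sig \<and> (\<forall>R\<in>sig. 1 \<le> ar R)"

record ('r, 'a) sstruct =
  univ :: "'a set"
  rels :: "'r \<Rightarrow> 'a list set"

definition is_struct :: "'r set \<Rightarrow> ('r \<Rightarrow> nat) \<Rightarrow> ('r, 'a) sstruct \<Rightarrow> bool" where
  "is_struct sig ar S \<longleftrightarrow> finite (univ S) \<and>
     (\<forall>R\<in>sig. \<forall>xs\<in>rels S R. length xs = ar R \<and> set xs \<subseteq> univ S)"

text \<open>Maximum arity (the default value 1 only matters for the empty signature).\<close>
definition max_arity :: "'r set \<Rightarrow> ('r \<Rightarrow> nat) \<Rightarrow> nat" where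
  "max_arity sig ar = Max (insert 1 (ar ` sig))"

text \<open>p V f stands for p_V(f) (V a subset of the universe of X, 1 <= |V| <= k, f : V -> A
  extensional), q R xs f stands for p_{R(xs)}(f) (f : set xs -> A extensional).\<close>
definition sa_feasible ::
  "'r set \<Rightarrow> ('r, 'a) sstruct \<Rightarrow> ('r, 'b) sstruct \<Rightarrow> nat \<Rightarrow> bool" where
  "sa_feasible sig X A k \<longleftrightarrow>
    (\<exists>(p :: 'a set \<Rightarrow> ('a \<Rightarrow> 'b) \<Rightarrow> real) (q :: 'r \<Rightarrow> 'a list \<Rightarrow> ('a \<Rightarrow> 'b) \<Rightarrow> real).
      (\<forall>V f. V \<subseteq> univ X \<and> 1 \<le> card V \<and> card V \<le> k \<and> f \<in> V \<rightarrow>\<^sub>E univ A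
          \<longrightarrow> 0 \<le> p V f \<and> p V f \<le> 1) \<and>
      (\<forall>R xs f. R \<in> sig \<and> xs \<in> rels X R \<and> f \<in> set xs \<rightarrow>\<^sub>E univ A
          \<longrightarrow> 0 \<le> q R xs f \<and> q R xs f \<le> 1) \<and>
      (\<forall>V. V \<subseteq> univ X \<and> 1 \<le> card V \<and> card V \<le> k
          \<longrightarrow> (\<Sum>f\<in>V \<rightarrow>\<^sub>E univ A. p V f) = 1) \<and>
      (\<forall>U V f. U \<noteq> {} \<and> U \<subseteq> V \<and> V \<subseteq> univ X \<and> card V \<le> k \<and> f \<in> U \<rightarrow>\<^sub>E univ A
          \<longrightarrow> p U f = (\<Sum>g\<in>{g \<in> V \<rightarrow>\<^sub>E univ A. restrict g U = f}. p V g)) \<and>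
      (\<forall>R xs U f. R \<in> sig \<and> xs \<in> rels X R \<and> U \<noteq> {} \<and> U \<subseteq> set xs \<and> card U \<le> k
          \<and> f \<in> U \<rightarrow>\<^sub>E univ A
          \<longrightarrow> p U f = (\<Sum>g\<in>{g \<in> set xs \<rightarrow>\<^sub>E univ A. restrict g U = f}. q R xs g)) \<and>
      (\<forall>R xs f. R \<in> sig \<and> xs \<in> rels X R \<and> f \<in> set xs \<rightarrow>\<^sub>E univ A
          \<and> map f xs \<notin> rels A R \<longrightarrow> q R xs f = 0))"

text \<open>A linear inequality over the finite variable set N is a pair (c, b) meaning
  sum_{l in N} c l * y l >= b.  A linearised monomial prod_{i in K} y_i is z K, where the
  empty monomial is the constant 1.\<close>
definition mono :: "('i set \<Rightarrow> real) \<Rightarrow> 'i set \<Rightarrow> real" where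
  "mono z K = (if K = {} then 1 else z K)"

text \<open>Multiplying (sum_l c l * y l - b >= 0) by prod_{i in I} y_i prod_{j in J} (1 - y_j)
  = sum_{S subseteq J} (-1)^|S| prod_{i in I union S} y_i and linearising
  (y_i^2 = y_i, prod_{i in K} y_i = z_K).\<close>
definition sa_lift_L :: "'i set \<Rightarrow> (('i \<Rightarrow> real) \<times> real) set \<Rightarrow> nat \<Rightarrow> ('i set \<Rightarrow> real) set" where
  "sa_lift_L N ineqs k = {z. \<forall>(c, b)\<in>ineqs. \<forall>I J. I \<subseteq> N \<and> J \<subseteq> N \<and> I \<inter> J = {}
      \<and> card (I \<union> J) \<le> k - 1 \<longrightarrow>
      0 \<le> (\<Sum>S\<in>Pow J. (-1) ^ card S *
              ((\<Sum>l\<in>N. c l * mono z (I \<union> S \<union> {l})) - b * mono z (I \<union> S)))}"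

definition sa_lift :: "'i set \<Rightarrow> (('i \<Rightarrow> real) \<times> real) set \<Rightarrow> nat \<Rightarrow> ('i \<Rightarrow> real) set" where
  "sa_lift N ineqs k = {y. (\<forall>i. i \<notin> N \<longrightarrow> y i = 0) \<and>
      (\<exists>z\<in>sa_lift_L N ineqs k. \<forall>i\<in>N. z {i} = y i)}"

text \<open>The inequality system: each equality
  sum_a y_{x,a} = 1 as two inequalities, each constraint inequality
  sum_{x in {xs}} y_{x,f x} <= |{xs}| - 1 (written as a >= inequality), and the bounds
  0 <= y <= 1 (as y_i >= 0 and -y_i >= -1).\<close>
definition poly_ineqs ::
  "'r set \<Rightarrow> ('r, 'a) sstruct \<Rightarrow> ('r, 'b) sstruct \<Rightarrow> ((('a \<times> 'b) \<Rightarrow> real) \<times> real) set" where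
  "poly_ineqs sig X A =
     {((\<lambda>(x', a). if x' = x then 1 else 0), 1) | x. x \<in> univ X}
   \<union> {((\<lambda>(x', a). if x' = x then -1 else 0), -1) | x. x \<in> univ X}
   \<union> {((\<lambda>(x', a). if x' \<in> set xs \<and> a = f x' then -1 else 0), - (real (card (set xs)) - 1))
        | R xs f. R \<in> sig \<and> xs \<in> rels X R \<and> f \<in> set xs \<rightarrow>\<^sub>E univ A \<and> map f xs \<notin> rels A R}
   \<union> {((\<lambda>j. if j = i then 1 else 0), 0) | i. i \<in> univ X \<times> univ A}
   \<union> {((\<lambda>j. if j = i then -1 else 0), -1) | i. i \<in> univ X \<times> univ A}"

definition polytope_P :: "'r set \<Rightarrow> ('r, 'a) sstruct \<Rightarrow> ('r, 'b) sstruct \<Rightarrow> ('a \<times> 'b \<Rightarrow> real) set" where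
  "polytope_P sig X A = {y. (\<forall>i. i \<notin> univ X \<times> univ A \<longrightarrow> y i = 0) \<and>
      (\<forall>(c, b)\<in>poly_ineqs sig X A. (\<Sum>l\<in>univ X \<times> univ A. c l * y l) \<ge> b)}"

definition polytope_SA :: "'r set \<Rightarrow> ('r, 'a) sstruct \<Rightarrow> ('r, 'b) sstruct \<Rightarrow> nat \<Rightarrow> ('a \<times> 'b \<Rightarrow> real) set" where
  "polytope_SA sig X A k = sa_lift (univ X \<times> univ A) (poly_ineqs sig X A) k"

end

(*
  (1) A point z of the Sherali-Adams lift of P at level k gives local distributions
  p_V(f) = z(graph of f) on assignments of sets V of at most k variables: the lifted bounds
  0 <= y <= 1 make them nonnegative, the lifted equalities sum_a y_{x,a} = 1 make them
  consistent under marginalisation, and the lifted constraint inequalities force them to vanish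
  on assignments violating a constraint.  For r <= k every constraint scope has at most k
  elements, so p_{R(x)} := p_{{x}} completes an SA^k solution.

  (2) Conversely, an SA^{k+r-1} solution gives z_K = Pr[the assignment contains K].  A lifted
  inequality of P^k has a multiplier with at most k-1 variables and an inequality involving
  at most r variables of X, so all of its monomials live on one window W of at most k+r-1
  variables of X.  There z is the moment vector of the single distribution p_W, which is
  supported on assignments satisfying the inequality, and the lifted inequality is the
  expectation of a nonnegative quantity.
*)
theory Submission
  imports Defs
begin

definition graph_on :: "'x set \<Rightarrow> ('x \<Rightarrow> 'y) \<Rightarrow> ('x \<times> 'y) set" where
  "graph_on V f = (\<lambda>x. (x, f x)) ` V"

lemma mem_graph_on [simp]: "(x, a) \<in> graph_on V f \<longleftrightarrow> x \<in> V \<and> a = f x"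
  by (auto simp: graph_on_def)

lemma card_graph_on: "card (graph_on V f) = card V"
  unfolding graph_on_def by (rule card_image) (auto simp: inj_on_def)

lemma graph_on_fun_upd: "x \<notin> D \<Longrightarrow> graph_on (insert x D) (h(x := a)) = insert (x, a) (graph_on D h)"
  by (auto simp: graph_on_def)

lemma sum_PiE_insert:
  assumes "x \<notin> D"
  shows "(\<Sum>h\<in>insert x D \<rightarrow>\<^sub>E B. F h) = (\<Sum>h\<in>D \<rightarrow>\<^sub>E B. \<Sum>a\<in>B. F (h(x := a)))"
proof -
  have "(\<Sum>h\<in>insert x D \<rightarrow>\<^sub>E B. F h) = (\<Sum>(a, h)\<in>B \<times> (D \<rightarrow>\<^sub>E B). F (h(x := a)))"
    unfolding PiE_insert_eq using assms
    by (subst sum.reindex[OF inj_combinator]) (simp_all add: case_prod_unfold)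
  also have "\<dots> = (\<Sum>h\<in>D \<rightarrow>\<^sub>E B. \<Sum>a\<in>B. F (h(x := a)))"
    by (subst sum.cartesian_product[symmetric]) (rule sum.swap)
  finally show ?thesis .
qed

lemma sum_Pow_alternating:
  assumes "finite T"
  shows "(\<Sum>S\<in>Pow T. (-1::real) ^ card S) = of_bool (T = {})"
proof -
  have "(\<Prod>x\<in>T. (1::real) - 1) = (\<Sum>S\<in>Pow T. (-1) ^ card S * (\<Prod>x\<in>S. 1) * (\<Prod>x\<in>T - S. 1))"
    by (rule prod_diff_conv_sum[OF assms])
  then show ?thesis
    using assms by (cases "T = {}") (auto simp: zero_power card_gt_0_iff)
qed

lemma sum_Pow_alternating_subset:
  assumes "finite J"
  shows "(\<Sum>S\<in>Pow J. (-1::real) ^ card S * of_bool (I \<union> S \<subseteq> G)) = of_bool (I \<subseteq> G \<and> J \<inter> G = {})"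
proof -
  have "(\<Sum>S\<in>Pow J. (-1::real) ^ card S * of_bool (I \<union> S \<subseteq> G))
      = of_bool (I \<subseteq> G) * (\<Sum>S\<in>Pow J. if S \<subseteq> G then (-1) ^ card S else 0)"
    by (subst sum_distrib_left) (rule sum.cong; auto)
  also have "(\<Sum>S\<in>Pow J. if S \<subseteq> G then (-1::real) ^ card S else 0) = (\<Sum>S\<in>Pow (J \<inter> G). (-1) ^ card S)"
    using assms by (simp add: sum.inter_filter[symmetric]) (rule sum.cong; auto)
  also have "(\<Sum>S\<in>Pow (J \<inter> G). (-1::real) ^ card S) = of_bool (J \<inter> G = {})"
    using assms by (intro sum_Pow_alternating) simp
  finally show ?thesis
    by simp
qed

lemma sa_lift_LI:
  assumes "\<And>c b I J. (c, b) \<in> ineqs \<Longrightarrow> I \<subseteq> N \<Longrightarrow> J \<subseteq> N \<Longrightarrow> I \<inter> J = {} \<Longrightarrow>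
      card (I \<union> J) \<le> k - 1 \<Longrightarrow>
      0 \<le> (\<Sum>S\<in>Pow J. (-1) ^ card S *
              ((\<Sum>l\<in>N. c l * mono z (I \<union> S \<union> {l})) - b * mono z (I \<union> S)))"
  shows "z \<in> sa_lift_L N ineqs k"
  using assms unfolding sa_lift_L_def by blast

lemma sa_lift_L_times_monomial:
  assumes "z \<in> sa_lift_L N ineqs k" "(c, b) \<in> ineqs" "I \<subseteq> N" "card I \<le> k - 1"
  shows "b * mono z I \<le> (\<Sum>l\<in>N. c l * mono z (I \<union> {l}))"
proof -
  have lifted: "\<forall>(c, b)\<in>ineqs. \<forall>I J. I \<subseteq> N \<and> J \<subseteq> N \<and> I \<inter> J = {} \<and> card (I \<union> J) \<le> k - 1 \<longrightarrow>
      0 \<le> (\<Sum>S\<in>Pow J. (-1) ^ card S *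
              ((\<Sum>l\<in>N. c l * mono z (I \<union> S \<union> {l})) - b * mono z (I \<union> S)))"
    using assms(1) unfolding sa_lift_L_def by (rule CollectD)
  have "\<forall>I J. I \<subseteq> N \<and> J \<subseteq> N \<and> I \<inter> J = {} \<and> card (I \<union> J) \<le> k - 1 \<longrightarrow>
      0 \<le> (\<Sum>S\<in>Pow J. (-1) ^ card S *
              ((\<Sum>l\<in>N. c l * mono z (I \<union> S \<union> {l})) - b * mono z (I \<union> S)))"
    using bspec[OF lifted assms(2)] by (simp only: prod.case)
  from this[rule_format, of I "{}"] show ?thesis
    using assms(3,4) by simp
qed

text \<open>The alternating sum over S is the indicator that T \<omega> contains I and misses J, so the lifted
  inequality is a nonnegative combination of the slacks of the inequality at the points T \<omega>.\<close>
lemma sa_lifted_ineq_of_distribution: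
  fixes \<mu> :: "'w \<Rightarrow> real" and T :: "'w \<Rightarrow> 'i set"
  assumes "finite J"
    and \<mu>_nonneg: "\<And>\<omega>. \<omega> \<in> \<Omega> \<Longrightarrow> 0 \<le> \<mu> \<omega>"
    and valid: "\<And>\<omega>. \<omega> \<in> \<Omega> \<Longrightarrow> \<mu> \<omega> \<noteq> 0 \<Longrightarrow> b \<le> (\<Sum>l\<in>N. c l * of_bool (l \<in> T \<omega>))"
    and moments: "\<And>K. K \<subseteq> I \<union> J \<union> {l \<in> N. c l \<noteq> 0} \<Longrightarrow>
      mono z K = (\<Sum>\<omega>\<in>\<Omega>. \<mu> \<omega> * of_bool (K \<subseteq> T \<omega>))"
  shows "0 \<le> (\<Sum>S\<in>Pow J. (-1) ^ card S *
              ((\<Sum>l\<in>N. c l * mono z (I \<union> S \<union> {l})) - b * mono z (I \<union> S)))"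
proof -
  define slack where "slack \<omega> = (\<Sum>l\<in>N. c l * of_bool (l \<in> T \<omega>)) - b" for \<omega>
  have lifted_term: "(\<Sum>l\<in>N. c l * mono z (I \<union> S \<union> {l})) - b * mono z (I \<union> S)
      = (\<Sum>\<omega>\<in>\<Omega>. \<mu> \<omega> * of_bool (I \<union> S \<subseteq> T \<omega>) * slack \<omega>)" if "S \<subseteq> J" for S
  proof -
    have "c l * mono z (I \<union> S \<union> {l}) = (\<Sum>\<omega>\<in>\<Omega>. c l * (\<mu> \<omega> * of_bool (I \<union> S \<subseteq> T \<omega>) * of_bool (l \<in> T \<omega>)))"
      if "l \<in> N" for l
    proof (cases "c l = 0")
      case False
      then have "mono z (I \<union> S \<union> {l}) = (\<Sum>\<omega>\<in>\<Omega>. \<mu> \<omega> * of_bool (I \<union> S \<union> {l} \<subseteq> T \<omega>))"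
        using \<open>S \<subseteq> J\<close> \<open>l \<in> N\<close> by (intro moments) auto
      then show ?thesis
        by (simp add: sum_distrib_left of_bool_conj mult_ac)
    qed simp
    then have "(\<Sum>l\<in>N. c l * mono z (I \<union> S \<union> {l}))
        = (\<Sum>\<omega>\<in>\<Omega>. \<mu> \<omega> * of_bool (I \<union> S \<subseteq> T \<omega>) * (\<Sum>l\<in>N. c l * of_bool (l \<in> T \<omega>)))"
      by (simp add: sum.swap[of _ N] sum_distrib_left mult_ac)
    moreover have "mono z (I \<union> S) = (\<Sum>\<omega>\<in>\<Omega>. \<mu> \<omega> * of_bool (I \<union> S \<subseteq> T \<omega>))"
      using that by (intro moments) auto
    ultimately show ?thesis
      by (simp add: slack_def sum_distrib_left sum_distrib_right sum_subtractf right_diff_distrib mult_ac)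
  qed
  have "(\<Sum>S\<in>Pow J. (-1) ^ card S *
              ((\<Sum>l\<in>N. c l * mono z (I \<union> S \<union> {l})) - b * mono z (I \<union> S)))
      = (\<Sum>S\<in>Pow J. (-1) ^ card S * (\<Sum>\<omega>\<in>\<Omega>. \<mu> \<omega> * of_bool (I \<union> S \<subseteq> T \<omega>) * slack \<omega>))"
    using lifted_term by (intro sum.cong) auto
  also have "\<dots> = (\<Sum>\<omega>\<in>\<Omega>. (\<Sum>S\<in>Pow J. (-1) ^ card S * of_bool (I \<union> S \<subseteq> T \<omega>)) * (\<mu> \<omega> * slack \<omega>))"
    by (simp add: sum_distrib_left sum_distrib_right sum.swap[of _ "Pow J"] mult_ac)
  also have "\<dots> = (\<Sum>\<omega>\<in>\<Omega>. of_bool (I \<subseteq> T \<omega> \<and> J \<inter> T \<omega> = {}) * (\<mu> \<omega> * slack \<omega>))"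
    by (simp only: sum_Pow_alternating_subset[OF \<open>finite J\<close>])
  also have "0 \<le> \<dots>"
    using \<mu>_nonneg valid by (force simp: slack_def intro!: sum_nonneg)
  finally show ?thesis .
qed

lemma sum_row_coeff:
  fixes h :: "'x \<times> 'y \<Rightarrow> real"
  assumes "x \<in> SX" "finite SX"
  shows "(\<Sum>l\<in>SX \<times> SA. (case l of (x', a) \<Rightarrow> if x' = x then t else 0) * h l) = t * (\<Sum>a\<in>SA. h (x, a))"
proof -
  have "(\<Sum>l\<in>SX \<times> SA. (case l of (x', a) \<Rightarrow> if x' = x then t else 0) * h l)
      = (\<Sum>x'\<in>SX. if x' = x then t * (\<Sum>a\<in>SA. h (x, a)) else 0)"
    by (simp add: sum.cartesian_product') (rule sum.cong; simp add: sum_distrib_left)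
  then show ?thesis
    using assms by simp
qed

lemma sum_point_coeff:
  fixes h :: "'i \<Rightarrow> real"
  assumes "i \<in> N" "finite N"
  shows "(\<Sum>l\<in>N. (if l = i then t else 0) * h l) = t * h i"
proof -
  have "(\<Sum>l\<in>N. (if l = i then t else 0) * h l) = (\<Sum>l\<in>N. if l = i then t * h i else 0)"
    by (rule sum.cong) auto
  then show ?thesis
    using assms by simp
qed

lemma sum_graph_coeff:
  fixes h :: "'x \<times> 'y \<Rightarrow> real"
  assumes "graph_on V f \<subseteq> N" "finite N"
  shows "(\<Sum>l\<in>N. (case l of (x', a) \<Rightarrow> if x' \<in> V \<and> a = f x' then -1 else 0) * h l) = - (\<Sum>x\<in>V. h (x, f x))"
proof -
  have "(\<Sum>l\<in>N. (case l of (x', a) \<Rightarrow> if x' \<in> V \<and> a = f x' then -1 else 0) * h l)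
      = (\<Sum>l\<in>N. if l \<in> graph_on V f then - h l else 0)"
    by (rule sum.cong) auto
  also have "\<dots> = - (\<Sum>l\<in>graph_on V f. h l)"
    using assms by (simp add: sum.If_cases Int_absorb1 sum_negf)
  also have "(\<Sum>l\<in>graph_on V f. h l) = (\<Sum>x\<in>V. h (x, f x))"
    unfolding graph_on_def by (subst sum.reindex) (auto simp: inj_on_def)
  finally show ?thesis .
qed

lemma poly_ineqs_row:
  "x \<in> univ X \<Longrightarrow> ((\<lambda>(x', a). if x' = x then 1 else 0), 1) \<in> poly_ineqs sig X A"
  "x \<in> univ X \<Longrightarrow> ((\<lambda>(x', a). if x' = x then -1 else 0), -1) \<in> poly_ineqs sig X A"
  by (auto simp: poly_ineqs_def)

lemma poly_ineqs_nonneg: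
  "i \<in> univ X \<times> univ A \<Longrightarrow> ((\<lambda>j. if j = i then 1 else 0), 0) \<in> poly_ineqs sig X A"
  by (auto simp: poly_ineqs_def)

lemma poly_ineqs_constraint:
  "R \<in> sig \<Longrightarrow> xs \<in> rels X R \<Longrightarrow> f \<in> set xs \<rightarrow>\<^sub>E univ A \<Longrightarrow> map f xs \<notin> rels A R \<Longrightarrow>
   ((\<lambda>(x', a). if x' \<in> set xs \<and> a = f x' then -1 else 0), - (real (card (set xs)) - 1))
     \<in> poly_ineqs sig X A"
  by (auto simp: poly_ineqs_def)

lemma poly_ineqs_cases:
  assumes "(c, b) \<in> poly_ineqs sig X A"
  obtains (row) x t where "x \<in> univ X" "c = (\<lambda>(x', a). if x' = x then t else 0)" "b = t"
  | (lower) i where "i \<in> univ X \<times> univ A" "c = (\<lambda>j. if j = i then 1 else 0)" "b = 0"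
  | (upper) i where "i \<in> univ X \<times> univ A" "c = (\<lambda>j. if j = i then -1 else 0)" "b = -1"
  | (constraint) R xs f where "R \<in> sig" "xs \<in> rels X R" "f \<in> set xs \<rightarrow>\<^sub>E univ A" "map f xs \<notin> rels A R"
      "c = (\<lambda>(x', a). if x' \<in> set xs \<and> a = f x' then -1 else 0)" "b = - (real (card (set xs)) - 1)"
  using assms unfolding poly_ineqs_def
  by (elim UnE CollectE exE conjE Pair_inject; blast)

locale csp_pair =
  fixes sig :: "'r set" and ar :: "'r \<Rightarrow> nat" and X :: "('r, 'x) sstruct" and A :: "('r, 'y) sstruct"
  assumes signature: "signature sig ar"
    and struct_X: "is_struct sig ar X" and struct_A: "is_struct sig ar A"
begin

lemma finite_univ_X: "finite (univ X)" and finite_univ_A: "finite (univ A)"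
  using struct_X struct_A by (simp_all add: is_struct_def)

lemma finite_vars: "finite (univ X \<times> univ A)"
  using finite_univ_X finite_univ_A by simp

lemma one_le_card_iff: "V \<subseteq> univ X \<Longrightarrow> 1 \<le> card V \<longleftrightarrow> V \<noteq> {}"
  using finite_univ_X by (auto simp: Suc_le_eq card_gt_0_iff dest: finite_subset)

lemma one_le_max_arity: "1 \<le> max_arity sig ar"
  using signature by (simp add: max_arity_def signature_def)

lemma constraint_scope:
  assumes "R \<in> sig" "xs \<in> rels X R"
  shows "set xs \<subseteq> univ X" "set xs \<noteq> {}" "card (set xs) \<le> max_arity sig ar"
proof -
  have "length xs = ar R" "set xs \<subseteq> univ X"
    using struct_X assms by (auto simp: is_struct_def)
  moreover have "1 \<le> ar R" "ar R \<le> max_arity sig ar"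
    using signature assms(1) by (auto simp: signature_def max_arity_def)
  ultimately show "set xs \<subseteq> univ X" "set xs \<noteq> {}" "card (set xs) \<le> max_arity sig ar"
    using card_length[of xs] by auto
qed

end

text \<open>An SA^k solution with the constraint variables p_{R(x)} projected away.\<close>
locale local_distributions = csp_pair sig ar X A
  for sig :: "'r set" and ar and X :: "('r, 'x) sstruct" and A :: "('r, 'y) sstruct" +
  fixes k :: nat and p :: "'x set \<Rightarrow> ('x \<Rightarrow> 'y) \<Rightarrow> real"
  assumes nonneg: "\<lbrakk>V \<subseteq> univ X; V \<noteq> {}; card V \<le> k; f \<in> V \<rightarrow>\<^sub>E univ A\<rbrakk> \<Longrightarrow> 0 \<le> p V f"
    and normalized: "\<lbrakk>V \<subseteq> univ X; V \<noteq> {}; card V \<le> k\<rbrakk> \<Longrightarrow> (\<Sum>f\<in>V \<rightarrow>\<^sub>E univ A. p V f) = 1"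
    and marginal: "\<lbrakk>U \<noteq> {}; U \<subseteq> V; V \<subseteq> univ X; card V \<le> k; f \<in> U \<rightarrow>\<^sub>E univ A\<rbrakk> \<Longrightarrow>
      p U f = (\<Sum>g\<in>{g \<in> V \<rightarrow>\<^sub>E univ A. restrict g U = f}. p V g)"
    and vanishes: "\<lbrakk>R \<in> sig; xs \<in> rels X R; card (set xs) \<le> k; f \<in> set xs \<rightarrow>\<^sub>E univ A;
      map f xs \<notin> rels A R\<rbrakk> \<Longrightarrow> p (set xs) f = 0"
begin

lemma finite_PiE_univ_A: "V \<subseteq> univ X \<Longrightarrow> finite (V \<rightarrow>\<^sub>E univ A)"
  using finite_univ_X finite_univ_A by (intro finite_PiE) (auto dest: finite_subset)

lemma le_one:
  assumes "V \<subseteq> univ X" "V \<noteq> {}" "card V \<le> k" "f \<in> V \<rightarrow>\<^sub>E univ A"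
  shows "p V f \<le> 1"
proof -
  have "p V f \<le> (\<Sum>g\<in>V \<rightarrow>\<^sub>E univ A. p V g)"
    using assms nonneg finite_PiE_univ_A by (intro member_le_sum) auto
  then show ?thesis
    using normalized assms by simp
qed

lemma sa_feasible:
  assumes "max_arity sig ar \<le> k"
  shows "sa_feasible sig X A k"
proof -
  have scope: "set xs \<subseteq> univ X \<and> set xs \<noteq> {} \<and> card (set xs) \<le> k" if "R \<in> sig" "xs \<in> rels X R" for R xs
    using constraint_scope[OF that] assms by auto
  show ?thesis
    unfolding sa_feasible_def
    by (intro exI[of _ p] exI[of _ "\<lambda>R xs. p (set xs)"])
      (auto simp: one_le_card_iff intro: nonneg le_one normalized marginal vanishes dest: scope)
qed

lemma le_marginal:
  assumes "U \<noteq> {}" "U \<subseteq> W" "W \<subseteq> univ X" "card W \<le> k" "g \<in> W \<rightarrow>\<^sub>E univ A"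
  shows "p W g \<le> p U (restrict g U)"
proof -
  have "W \<noteq> {}"
    using assms(1,2) by blast
  then have "p W g \<le> (\<Sum>h\<in>{h \<in> W \<rightarrow>\<^sub>E univ A. restrict h U = restrict g U}. p W h)"
    using assms nonneg finite_PiE_univ_A by (intro member_le_sum) auto
  also have "\<dots> = p U (restrict g U)"
    using assms by (intro marginal[symmetric]) auto
  finally show ?thesis .
qed

lemma sum_marginal:
  assumes "U \<noteq> {}" "U \<subseteq> W" "W \<subseteq> univ X" "card W \<le> k"
  shows "(\<Sum>g\<in>W \<rightarrow>\<^sub>E univ A. p W g * \<phi> (restrict g U)) = (\<Sum>f\<in>U \<rightarrow>\<^sub>E univ A. p U f * \<phi> f)"
proof -
  have "(\<Sum>f\<in>U \<rightarrow>\<^sub>E univ A. p U f * \<phi> f)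
      = (\<Sum>f\<in>U \<rightarrow>\<^sub>E univ A. \<Sum>g\<in>{g \<in> W \<rightarrow>\<^sub>E univ A. restrict g U = f}. p W g * \<phi> (restrict g U))"
    using assms by (intro sum.cong refl) (simp add: marginal[of U W] sum_distrib_right)
  also have "\<dots> = (\<Sum>g\<in>W \<rightarrow>\<^sub>E univ A. p W g * \<phi> (restrict g U))"
    using assms finite_PiE_univ_A by (intro sum.group) auto
  finally show ?thesis ..
qed

definition moment :: "('x \<times> 'y) set \<Rightarrow> real" where
  "moment K = (\<Sum>f\<in>fst ` K \<rightarrow>\<^sub>E univ A. p (fst ` K) f * of_bool (K \<subseteq> graph_on (fst ` K) f))"

lemma mono_moment:
  assumes "fst ` K \<subseteq> W" "W \<subseteq> univ X" "W \<noteq> {}" "card W \<le> k"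
  shows "mono moment K = (\<Sum>g\<in>W \<rightarrow>\<^sub>E univ A. p W g * of_bool (K \<subseteq> graph_on W g))"
proof (cases "K = {}")
  case True
  then show ?thesis
    using assms by (simp add: mono_def normalized)
next
  case False
  have "K \<subseteq> graph_on W g \<longleftrightarrow> K \<subseteq> graph_on (fst ` K) (restrict g (fst ` K))" for g
    using assms(1) by (force simp: graph_on_def)
  then have "(\<Sum>g\<in>W \<rightarrow>\<^sub>E univ A. p W g * of_bool (K \<subseteq> graph_on W g)) = moment K"
    unfolding moment_def using False assms
    by (simp add: sum_marginal[where \<phi> = "\<lambda>f. of_bool (K \<subseteq> graph_on (fst ` K) f)"])
  then show ?thesis
    using False by (simp add: mono_def)
qed

lemma violation_has_probability_zero:
  assumes "R \<in> sig" "xs \<in> rels X R" "f \<in> set xs \<rightarrow>\<^sub>E univ A" "map f xs \<notin> rels A R"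
    and "set xs \<subseteq> W" "W \<subseteq> univ X" "card W \<le> k" "g \<in> W \<rightarrow>\<^sub>E univ A" "restrict g (set xs) = f"
  shows "p W g = 0"
proof -
  have "set xs \<noteq> {}"
    using constraint_scope(2)[OF assms(1,2)] .
  then have "W \<noteq> {}"
    using assms(5) by auto
  have "card (set xs) \<le> k"
    using card_mono[OF finite_subset[OF assms(6) finite_univ_X] assms(5)] assms(7) by simp
  have "p W g \<le> p (set xs) f"
    using le_marginal[OF \<open>set xs \<noteq> {}\<close> assms(5-8)] assms(9) by simp
  also have "p (set xs) f = 0"
    using vanishes[OF assms(1,2) \<open>card (set xs) \<le> k\<close> assms(3,4)] .
  finally show ?thesis
    using nonneg[OF assms(6) \<open>W \<noteq> {}\<close> assms(7,8)] by simp
qed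

lemma constraint_ineq_valid:
  assumes "R \<in> sig" "xs \<in> rels X R" "f \<in> set xs \<rightarrow>\<^sub>E univ A" "map f xs \<notin> rels A R"
    and "set xs \<subseteq> W" "W \<subseteq> univ X" "card W \<le> k" "g \<in> W \<rightarrow>\<^sub>E univ A" "p W g \<noteq> 0"
  shows "- (real (card (set xs)) - 1) \<le> (\<Sum>l\<in>univ X \<times> univ A.
      (case l of (x', a) \<Rightarrow> if x' \<in> set xs \<and> a = f x' then -1 else 0) * of_bool (l \<in> graph_on W g))"
proof -
  have "\<not> (\<forall>x\<in>set xs. g x = f x)"
  proof
    assume "\<forall>x\<in>set xs. g x = f x"
    then have "restrict g (set xs) = f"
      using assms(3) by (metis PiE_restrict restrict_ext)
    then show False
      using violation_has_probability_zero[OF assms(1-8)] assms(9) by blast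
  qed
  then obtain x0 where x0: "x0 \<in> set xs" "g x0 \<noteq> f x0"
    by blast
  have "graph_on (set xs) f \<subseteq> univ X \<times> univ A"
    using assms(3) constraint_scope[OF assms(1,2)] by (auto simp: graph_on_def)
  then have "(\<Sum>l\<in>univ X \<times> univ A.
      (case l of (x', a) \<Rightarrow> if x' \<in> set xs \<and> a = f x' then -1 else 0) * of_bool (l \<in> graph_on W g))
      = - (\<Sum>x\<in>set xs. of_bool ((x, f x) \<in> graph_on W g) :: real)"
    using finite_vars by (rule sum_graph_coeff)
  also have "\<dots> = - (\<Sum>x\<in>set xs - {x0}. of_bool (g x = f x))"
    using assms(5) x0 by simp (rule arg_cong[where f = card]; auto)
  finally have at_graph: "(\<Sum>l\<in>univ X \<times> univ A.
      (case l of (x', a) \<Rightarrow> if x' \<in> set xs \<and> a = f x' then -1 else 0) * of_bool (l \<in> graph_on W g))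
      = - (\<Sum>x\<in>set xs - {x0}. of_bool (g x = f x) :: real)" .
  have "(\<Sum>x\<in>set xs - {x0}. of_bool (g x = f x) :: real) \<le> real (card (set xs - {x0}))"
    using sum_bounded_above[of "set xs - {x0}" "\<lambda>x. of_bool (g x = f x) :: real" 1] by simp
  also have "\<dots> = real (card (set xs)) - 1"
  proof -
    have "0 < card (set xs)"
      using x0 by (auto simp: card_gt_0_iff)
    then show ?thesis
      using x0 by (simp add: of_nat_diff)
  qed
  finally show ?thesis
    unfolding at_graph by simp
qed

lemma poly_ineq_local:
  assumes "(c, b) \<in> poly_ineqs sig X A"
  obtains V where "V \<subseteq> univ X" "V \<noteq> {}" "card V \<le> max_arity sig ar"
    and "\<And>l. l \<in> univ X \<times> univ A \<Longrightarrow> c l \<noteq> 0 \<Longrightarrow> fst l \<in> V"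
    and "\<And>W g. V \<subseteq> W \<Longrightarrow> W \<subseteq> univ X \<Longrightarrow> card W \<le> k \<Longrightarrow> g \<in> W \<rightarrow>\<^sub>E univ A \<Longrightarrow> p W g \<noteq> 0 \<Longrightarrow>
      b \<le> (\<Sum>l\<in>univ X \<times> univ A. c l * of_bool (l \<in> graph_on W g))"
  using assms
proof (cases rule: poly_ineqs_cases)
  case (row x t)
  have "(\<Sum>l\<in>univ X \<times> univ A. c l * of_bool (l \<in> graph_on W g)) = t"
    if "x \<in> W" "g \<in> W \<rightarrow>\<^sub>E univ A" for W g
  proof -
    have "(\<Sum>l\<in>univ X \<times> univ A. c l * of_bool (l \<in> graph_on W g))
        = t * (\<Sum>a\<in>univ A. of_bool ((x, a) \<in> graph_on W g))"
      unfolding row(2) using row(1) finite_univ_X by (rule sum_row_coeff)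
    also have "(\<Sum>a\<in>univ A. of_bool ((x, a) \<in> graph_on W g)) = (1::real)"
      using PiE_mem[OF that(2,1)] that(1) finite_univ_A by (simp add: Int_insert_right)
    finally show ?thesis
      by simp
  qed
  then show ?thesis
    using row one_le_max_arity by (intro that[of "{x}"]) (auto split: if_splits)
next
  case (lower i)
  then show ?thesis
    using one_le_max_arity finite_vars by (intro that[of "{fst i}"]) (auto simp: sum_point_coeff split: if_splits)
next
  case (upper i)
  then show ?thesis
    using one_le_max_arity finite_vars by (intro that[of "{fst i}"]) (auto simp: sum_point_coeff split: if_splits)
next
  case (constraint R xs f)
  then show ?thesis
    using constraint_scope[of R xs] constraint_ineq_valid[of R xs f]
    by (intro that[of "set xs"]) (auto split: if_splits)
qed

lemma moment_lifted:
  assumes "k' - 1 + max_arity sig ar \<le> k"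
  shows "moment \<in> sa_lift_L (univ X \<times> univ A) (poly_ineqs sig X A) k'"
proof (rule sa_lift_LI)
  fix c b I J
  assume cb: "(c, b) \<in> poly_ineqs sig X A"
    and IJ: "I \<subseteq> univ X \<times> univ A" "J \<subseteq> univ X \<times> univ A" "card (I \<union> J) \<le> k' - 1"
  obtain V where V: "V \<subseteq> univ X" "V \<noteq> {}" "card V \<le> max_arity sig ar"
    and supp: "\<And>l. l \<in> univ X \<times> univ A \<Longrightarrow> c l \<noteq> 0 \<Longrightarrow> fst l \<in> V"
    and valid: "\<And>W g. V \<subseteq> W \<Longrightarrow> W \<subseteq> univ X \<Longrightarrow> card W \<le> k \<Longrightarrow> g \<in> W \<rightarrow>\<^sub>E univ A \<Longrightarrow>
      p W g \<noteq> 0 \<Longrightarrow> b \<le> (\<Sum>l\<in>univ X \<times> univ A. c l * of_bool (l \<in> graph_on W g))"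
    using poly_ineq_local[OF cb] by blast
  define W where "W = fst ` (I \<union> J) \<union> V"
  have W: "V \<subseteq> W" "W \<subseteq> univ X" "W \<noteq> {}"
    using IJ V by (auto simp: W_def)
  have "card W \<le> card (I \<union> J) + card V"
    unfolding W_def by (rule order_trans[OF card_Un_le add_right_mono[OF card_image_le]])
      (use IJ finite_vars in \<open>auto dest: finite_subset\<close>)
  with IJ(3) V(3) assms have "card W \<le> k"
    by linarith
  show "0 \<le> (\<Sum>S\<in>Pow J. (-1) ^ card S *
      ((\<Sum>l\<in>univ X \<times> univ A. c l * mono moment (I \<union> S \<union> {l})) - b * mono moment (I \<union> S)))"
  proof (rule sa_lifted_ineq_of_distribution[where \<Omega> = "W \<rightarrow>\<^sub>E univ A" and \<mu> = "p W" and T = "graph_on W"])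
    show "finite J"
      using IJ(2) finite_vars by (rule finite_subset)
    show "0 \<le> p W g" if "g \<in> W \<rightarrow>\<^sub>E univ A" for g
      using nonneg W \<open>card W \<le> k\<close> that by blast
    show "b \<le> (\<Sum>l\<in>univ X \<times> univ A. c l * of_bool (l \<in> graph_on W g))"
      if "g \<in> W \<rightarrow>\<^sub>E univ A" "p W g \<noteq> 0" for g
      using valid W \<open>card W \<le> k\<close> that by blast
    show "mono moment K = (\<Sum>g\<in>W \<rightarrow>\<^sub>E univ A. p W g * of_bool (K \<subseteq> graph_on W g))"
      if "K \<subseteq> I \<union> J \<union> {l \<in> univ X \<times> univ A. c l \<noteq> 0}" for K
    proof (rule mono_moment)
      show "fst ` K \<subseteq> W"
        using that supp by (force simp: W_def)
    qed (use W \<open>card W \<le> k\<close> in auto)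
  qed
qed

lemma polytope_SA_nonempty:
  assumes "k' - 1 + max_arity sig ar \<le> k"
  shows "polytope_SA sig X A k' \<noteq> {}"
proof -
  have "(\<lambda>i. if i \<in> univ X \<times> univ A then moment {i} else 0) \<in> polytope_SA sig X A k'"
    using moment_lifted[OF assms] unfolding polytope_SA_def sa_lift_def by auto
  then show ?thesis
    by blast
qed

end

locale sa_lift_point = csp_pair sig ar X A
  for sig :: "'r set" and ar and X :: "('r, 'x) sstruct" and A :: "('r, 'y) sstruct" +
  fixes k :: nat and z :: "('x \<times> 'y) set \<Rightarrow> real"
  assumes lifted: "z \<in> sa_lift_L (univ X \<times> univ A) (poly_ineqs sig X A) k"
begin

lemma times_monomial:
  "(c, b) \<in> poly_ineqs sig X A \<Longrightarrow> I \<subseteq> univ X \<times> univ A \<Longrightarrow> card I \<le> k - 1 \<Longrightarrow>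
    b * mono z I \<le> (\<Sum>l\<in>univ X \<times> univ A. c l * mono z (I \<union> {l}))"
  by (rule sa_lift_L_times_monomial[OF lifted])

lemma mono_nonneg:
  assumes "K \<subseteq> univ X \<times> univ A" "card K \<le> k"
  shows "0 \<le> mono z K"
proof (cases "K = {}")
  case False
  then obtain i where "i \<in> K"
    by blast
  have "finite K"
    using assms(1) finite_vars by (rule finite_subset)
  have "0 * mono z (K - {i}) \<le> (\<Sum>l\<in>univ X \<times> univ A. (if l = i then 1 else 0) * mono z (K - {i} \<union> {l}))"
    using \<open>i \<in> K\<close> \<open>finite K\<close> assms by (intro times_monomial poly_ineqs_nonneg) auto
  also have "\<dots> = mono z K"
    using \<open>i \<in> K\<close> assms(1) finite_vars by (subst sum_point_coeff) (auto simp: insert_absorb)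
  finally show ?thesis
    by simp
qed (simp add: mono_def)

lemma sum_insert_row:
  assumes "K \<subseteq> univ X \<times> univ A" "card K \<le> k - 1" "x \<in> univ X"
  shows "(\<Sum>a\<in>univ A. mono z (insert (x, a) K)) = mono z K"
proof -
  have "t * mono z K \<le> t * (\<Sum>a\<in>univ A. mono z (insert (x, a) K))" if "t = 1 \<or> t = -1" for t :: real
  proof -
    have "t * mono z K \<le> (\<Sum>l\<in>univ X \<times> univ A. (case l of (x', a) \<Rightarrow> if x' = x then t else 0) * mono z (K \<union> {l}))"
      using that assms poly_ineqs_row by (intro times_monomial) auto
    also have "\<dots> = t * (\<Sum>a\<in>univ A. mono z (insert (x, a) K))"
      using assms(3) finite_univ_X by (simp add: sum_row_coeff)
    finally show ?thesis .
  qed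
  from this[of 1] this[of "-1"] show ?thesis
    by simp
qed

lemma mono_graph_on_violation:
  assumes "R \<in> sig" "xs \<in> rels X R" "f \<in> set xs \<rightarrow>\<^sub>E univ A" "map f xs \<notin> rels A R"
    and "card (set xs) \<le> k"
  shows "mono z (graph_on (set xs) f) = 0"
proof -
  define K where "K = graph_on (set xs) f"
  obtain x0 where "x0 \<in> set xs"
    using constraint_scope(2)[OF assms(1,2)] by (meson ex_in_conv)
  define I where "I = K - {(x0, f x0)}"
  have K: "K \<subseteq> univ X \<times> univ A" "card K = card (set xs)" "(x0, f x0) \<in> K"
    using constraint_scope(1)[OF assms(1,2)] assms(3) \<open>x0 \<in> set xs\<close>
    by (auto simp: K_def card_graph_on)
  have I: "I \<subseteq> univ X \<times> univ A" "card I = card (set xs) - 1" "insert (x0, f x0) I = K"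
    using K finite_subset[OF K(1) finite_vars] by (auto simp: I_def)
  have "- (real (card (set xs)) - 1) * mono z I
      \<le> (\<Sum>l\<in>univ X \<times> univ A. (case l of (x', a) \<Rightarrow> if x' \<in> set xs \<and> a = f x' then -1 else 0) * mono z (I \<union> {l}))"
    using assms I by (intro times_monomial poly_ineqs_constraint) auto
  also have "\<dots> = - (\<Sum>x\<in>set xs. mono z (insert (x, f x) I))"
    using K(1) finite_vars unfolding K_def by (simp add: sum_graph_coeff)
  also have "(\<Sum>x\<in>set xs. mono z (insert (x, f x) I)) = mono z K + (\<Sum>x\<in>set xs - {x0}. mono z I)"
    using \<open>x0 \<in> set xs\<close> I(3) by (simp add: sum.remove) (auto simp: I_def K_def insert_absorb intro!: sum.cong)
  finally have "mono z K \<le> 0"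
    using \<open>x0 \<in> set xs\<close> card_gt_0_iff[of "set xs"] by (auto simp: of_nat_diff algebra_simps)
  moreover have "0 \<le> mono z K"
    using K assms(5) by (intro mono_nonneg) auto
  ultimately show ?thesis
    by (simp add: K_def)
qed

lemma sum_union_graph_on:
  assumes "D \<subseteq> univ X" "K \<subseteq> univ X \<times> univ A" "fst ` K \<inter> D = {}" "card K + card D \<le> k"
  shows "(\<Sum>h\<in>D \<rightarrow>\<^sub>E univ A. mono z (K \<union> graph_on D h)) = mono z K"
proof -
  have "finite D"
    using assms(1) finite_univ_X by (rule finite_subset)
  from this assms show ?thesis
  proof (induction D rule: finite_induct)
    case empty
    then show ?case
      by (simp add: graph_on_def)
  next
    case (insert x D)
    have "(\<Sum>h\<in>insert x D \<rightarrow>\<^sub>E univ A. mono z (K \<union> graph_on (insert x D) h))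
        = (\<Sum>h\<in>D \<rightarrow>\<^sub>E univ A. \<Sum>a\<in>univ A. mono z (insert (x, a) (K \<union> graph_on D h)))"
      using insert.hyps(2) by (simp add: sum_PiE_insert graph_on_fun_upd)
    also have "\<dots> = (\<Sum>h\<in>D \<rightarrow>\<^sub>E univ A. mono z (K \<union> graph_on D h))"
    proof (intro sum.cong refl sum_insert_row)
      fix h assume "h \<in> D \<rightarrow>\<^sub>E univ A"
      then show "K \<union> graph_on D h \<subseteq> univ X \<times> univ A"
        using insert.prems(1,2) by auto
      show "card (K \<union> graph_on D h) \<le> k - 1"
        using card_Un_le[of K "graph_on D h"] insert.hyps insert.prems(4) by (simp add: card_graph_on)
    qed (use insert.prems(1) in simp)
    also have "\<dots> = mono z K"
      using insert by auto
    finally show ?case .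
  qed
qed

lemma marginal_graph_on:
  assumes "U \<subseteq> V" "V \<subseteq> univ X" "card V \<le> k" "f \<in> U \<rightarrow>\<^sub>E univ A"
  shows "mono z (graph_on U f) = (\<Sum>g\<in>{g \<in> V \<rightarrow>\<^sub>E univ A. restrict g U = f}. mono z (graph_on V g))"
proof -
  have "finite V"
    using assms(2) finite_univ_X by (rule finite_subset)
  then have "card (graph_on U f) + card (V - U) \<le> k"
    using assms(1,3) by (simp add: card_graph_on card_Diff_subset card_mono finite_subset)
  then have "mono z (graph_on U f) = (\<Sum>h\<in>V - U \<rightarrow>\<^sub>E univ A. mono z (graph_on U f \<union> graph_on (V - U) h))"
    using assms by (intro sum_union_graph_on[symmetric]) (auto simp: graph_on_def)
  also have "\<dots> = (\<Sum>g\<in>{g \<in> V \<rightarrow>\<^sub>E univ A. restrict g U = f}. mono z (graph_on V g))"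
  proof (rule sum.reindex_bij_witness[where i = "\<lambda>g. restrict g (V - U)" and j = "\<lambda>h x. if x \<in> U then f x else h x"])
    fix g assume "g \<in> {g \<in> V \<rightarrow>\<^sub>E univ A. restrict g U = f}"
    then show "(\<lambda>x. if x \<in> U then f x else restrict g (V - U) x) = g"
      using assms(1) by (auto simp: fun_eq_iff PiE_def extensional_def restrict_def) metis
  next
    fix h assume "h \<in> V - U \<rightarrow>\<^sub>E univ A"
    then show "(\<lambda>x. if x \<in> U then f x else h x) \<in> {g \<in> V \<rightarrow>\<^sub>E univ A. restrict g U = f}"
      "restrict (\<lambda>x. if x \<in> U then f x else h x) (V - U) = h"
      using assms(1,4) by (auto simp: fun_eq_iff PiE_def extensional_def restrict_def)
    have "graph_on V (\<lambda>x. if x \<in> U then f x else h x) = graph_on U f \<union> graph_on (V - U) h"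
      using assms(1) by (auto simp: graph_on_def)
    then show "mono z (graph_on V (\<lambda>x. if x \<in> U then f x else h x)) = mono z (graph_on U f \<union> graph_on (V - U) h)"
      by simp
  qed auto
  finally show ?thesis .
qed

lemma local_distributions_mono_graph_on: "local_distributions sig ar X A k (\<lambda>V f. mono z (graph_on V f))"
proof unfold_locales
  fix V f assume "V \<subseteq> univ X" "card V \<le> k" "f \<in> V \<rightarrow>\<^sub>E univ A"
  then show "0 \<le> mono z (graph_on V f)"
    by (intro mono_nonneg) (auto simp: card_graph_on)
next
  fix V assume "V \<subseteq> univ X" "card V \<le> k"
  then have "mono z (graph_on {} (\<lambda>_. undefined))
      = (\<Sum>g\<in>{g \<in> V \<rightarrow>\<^sub>E univ A. restrict g {} = (\<lambda>_. undefined)}. mono z (graph_on V g))"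
    by (intro marginal_graph_on) auto
  then show "(\<Sum>f\<in>V \<rightarrow>\<^sub>E univ A. mono z (graph_on V f)) = 1"
    by (simp add: graph_on_def mono_def restrict_def)
qed (auto intro: marginal_graph_on mono_graph_on_violation)

end

lemma (in csp_pair) local_distributions_if_sa_feasible:
  assumes "sa_feasible sig X A k"
  obtains p where "local_distributions sig ar X A k p"
proof -
  obtain p :: "'x set \<Rightarrow> ('x \<Rightarrow> 'y) \<Rightarrow> real" and q :: "'r \<Rightarrow> 'x list \<Rightarrow> ('x \<Rightarrow> 'y) \<Rightarrow> real" where
    nonneg: "\<forall>V f. V \<subseteq> univ X \<and> 1 \<le> card V \<and> card V \<le> k \<and> f \<in> V \<rightarrow>\<^sub>E univ A \<longrightarrow> 0 \<le> p V f \<and> p V f \<le> 1"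
    and normalized: "\<forall>V. V \<subseteq> univ X \<and> 1 \<le> card V \<and> card V \<le> k \<longrightarrow> (\<Sum>f\<in>V \<rightarrow>\<^sub>E univ A. p V f) = 1"
    and marginal: "\<forall>U V f. U \<noteq> {} \<and> U \<subseteq> V \<and> V \<subseteq> univ X \<and> card V \<le> k \<and> f \<in> U \<rightarrow>\<^sub>E univ A
      \<longrightarrow> p U f = (\<Sum>g\<in>{g \<in> V \<rightarrow>\<^sub>E univ A. restrict g U = f}. p V g)"
    and constraint_marginal: "\<forall>R xs U f. R \<in> sig \<and> xs \<in> rels X R \<and> U \<noteq> {} \<and> U \<subseteq> set xs \<and> card U \<le> k
      \<and> f \<in> U \<rightarrow>\<^sub>E univ A \<longrightarrow> p U f = (\<Sum>g\<in>{g \<in> set xs \<rightarrow>\<^sub>E univ A. restrict g U = f}. q R xs g)"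
    and constraint_support: "\<forall>R xs f. R \<in> sig \<and> xs \<in> rels X R \<and> f \<in> set xs \<rightarrow>\<^sub>E univ A
      \<and> map f xs \<notin> rels A R \<longrightarrow> q R xs f = 0"
    using assms unfolding sa_feasible_def by (elim exE conjE) blast
  have "local_distributions sig ar X A k p"
  proof unfold_locales
    fix V f assume "V \<subseteq> univ X" "V \<noteq> {}" "card V \<le> k" "f \<in> V \<rightarrow>\<^sub>E univ A"
    then show "0 \<le> p V f"
      using nonneg one_le_card_iff by blast
  next
    fix V assume "V \<subseteq> univ X" "V \<noteq> {}" "card V \<le> k"
    then show "(\<Sum>f\<in>V \<rightarrow>\<^sub>E univ A. p V f) = 1"
      using normalized one_le_card_iff by blast
  next
    fix U V f assume "U \<noteq> {}" "U \<subseteq> V" "V \<subseteq> univ X" "card V \<le> k" "f \<in> U \<rightarrow>\<^sub>E univ A"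
    then show "p U f = (\<Sum>g\<in>{g \<in> V \<rightarrow>\<^sub>E univ A. restrict g U = f}. p V g)"
      using marginal by blast
  next
    fix R xs f
    assume R: "R \<in> sig" "xs \<in> rels X R" "card (set xs) \<le> k" "f \<in> set xs \<rightarrow>\<^sub>E univ A" "map f xs \<notin> rels A R"
    have "p (set xs) f = (\<Sum>g\<in>{g \<in> set xs \<rightarrow>\<^sub>E univ A. restrict g (set xs) = f}. q R xs g)"
      using constraint_marginal constraint_scope(2)[OF R(1,2)] R(1-4) by blast
    also have "{g \<in> set xs \<rightarrow>\<^sub>E univ A. restrict g (set xs) = f} = {f}"
      using R(4) by auto
    finally show "p (set xs) f = 0"
      using constraint_support R by simp
  qed
  then show ?thesis
    by (rule that)
qed

theorem lemmaA1:
  fixes sig :: "'r set" and ar :: "'r \<Rightarrow> nat"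
    and X :: "('r, 'a) sstruct" and A :: "('r, 'b) sstruct" and k :: nat
  assumes "signature sig ar" and "is_struct sig ar X" and "is_struct sig ar A" and "1 \<le> k"
  shows "(polytope_SA sig X A k \<noteq> {} \<and> max_arity sig ar \<le> k \<longrightarrow> sa_feasible sig X A k)
       \<and> (sa_feasible sig X A (k + max_arity sig ar - 1) \<longrightarrow> polytope_SA sig X A k \<noteq> {})"
proof -
  interpret csp_pair sig ar X A
    using assms(1-3) by unfold_locales
  show ?thesis
  proof (intro conjI impI)
    assume "polytope_SA sig X A k \<noteq> {} \<and> max_arity sig ar \<le> k"
    then obtain z where "z \<in> sa_lift_L (univ X \<times> univ A) (poly_ineqs sig X A) k"
      by (auto simp: polytope_SA_def sa_lift_def)
    then interpret sa_lift_point sig ar X A k z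
      by unfold_locales
    show "sa_feasible sig X A k"
      using local_distributions.sa_feasible[OF local_distributions_mono_graph_on] \<open>_ \<and> max_arity sig ar \<le> k\<close> by blast
  next
    assume "sa_feasible sig X A (k + max_arity sig ar - 1)"
    then obtain p where "local_distributions sig ar X A (k + max_arity sig ar - 1) p"
      by (rule local_distributions_if_sa_feasible)
    then show "polytope_SA sig X A k \<noteq> {}"
      by (rule local_distributions.polytope_SA_nonempty) (use assms(4) in simp)
  qed
qed

end
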